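(* Let $F$ be a subfield of $\mathbb{R}$ and let $\sigma\subseteq\mathbb{R}^n$ be a $k$-dimensional $F$-simplex with one vertex $v_0$ at the origin. Then there is an orthogonal basis $U$ of $\mathbb{R}^n$ such that the squared length of each vector in $U$ lies in $F$ and all coordinates of all vertices of $\sigma$ with respect to $U$ lie in $F$.
   Context: A Euclidean simplex is an $F$-simplex if the square of the length of each of its edges ($1$-cells) lies in $F$. *)

theory Defs
  imports "HOL-Analysis.Analysis"
begin

definition real_subfield :: "real set \<Rightarrow> bool" where
  "real_subfield F \<longleftrightarrow> 0 \<in> F \<and> 1 \<in> F \<and>
     (\<forall>x\<in>F. \<forall>y\<in>F. x + y \<in> F \<and> x - y \<in> F \<and> x * y \<in> F) \<and>
     (\<forall>x\<in>F. x \<noteq> 0 \<longrightarrow> inverse x \<in> F)"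

definition simplex_vertices :: "'a::euclidean_space set \<Rightarrow> 'a set" where
  "simplex_vertices S = {v. v extreme_point_of S}"

definition F_simplex :: "real set \<Rightarrow> 'a::euclidean_space set \<Rightarrow> bool" where
  "F_simplex F S \<longleftrightarrow> (\<exists>k. k simplex S) \<and>
     (\<forall>x\<in>simplex_vertices S. \<forall>y\<in>simplex_vertices S. x \<noteq> y \<longrightarrow> (dist x y)\<^sup>2 \<in> F)"

end

theory Submission
  imports Defs
begin

text \<open>
  Since \<open>0\<close> is a vertex, \<open>|v|\<^sup>2\<close> and \<open>|v - w|\<^sup>2\<close> lie in \<open>F\<close> for all vertices \<open>v, w\<close>,
  so by polarization all inner products of vertices lie in \<open>F\<close>. Gram--Schmidt applied
  to the vertices uses only field operations on such inner products: it produces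
  pairwise orthogonal vectors whose squared lengths lie in \<open>F\<close> and with respect to which
  every vertex has coordinates in \<open>F\<close>. Completing them to an orthogonal basis of
  \<open>\<real>\<^sup>n\<close> by unit vectors preserves both properties.
\<close>

lemma real_subfield_0: "real_subfield F \<Longrightarrow> 0 \<in> F"
  unfolding real_subfield_def by blast

lemma real_subfield_1: "real_subfield F \<Longrightarrow> 1 \<in> F"
  unfolding real_subfield_def by blast

lemma real_subfield_add: "real_subfield F \<Longrightarrow> x \<in> F \<Longrightarrow> y \<in> F \<Longrightarrow> x + y \<in> F"
  unfolding real_subfield_def by blast

lemma real_subfield_diff: "real_subfield F \<Longrightarrow> x \<in> F \<Longrightarrow> y \<in> F \<Longrightarrow> x - y \<in> F"
  unfolding real_subfield_def by blast

lemma real_subfield_mult: "real_subfield F \<Longrightarrow> x \<in> F \<Longrightarrow> y \<in> F \<Longrightarrow> x * y \<in> F"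
  unfolding real_subfield_def by blast

lemma real_subfield_divide:
  assumes "real_subfield F" "x \<in> F" "y \<in> F"
  shows "x / y \<in> F"
proof (cases "y = 0")
  case True
  then show ?thesis using real_subfield_0[OF assms(1)] by simp
next
  case False
  then have "inverse y \<in> F" using assms unfolding real_subfield_def by blast
  then show ?thesis using assms real_subfield_mult by (simp add: divide_inverse)
qed

lemma real_subfield_sum:
  assumes "real_subfield F" "\<And>x. x \<in> A \<Longrightarrow> f x \<in> F"
  shows "sum f A \<in> F"
  using assms(2)
proof (induction A rule: infinite_finite_induct)
  case (insert x A)
  then show ?case using real_subfield_add[OF assms(1)] by simp
qed (use real_subfield_0[OF assms(1)] in simp_all)

definition has_F_coordinates :: "real set \<Rightarrow> 'a::real_vector set \<Rightarrow> 'a \<Rightarrow> bool" where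
  "has_F_coordinates F B v \<longleftrightarrow> (\<exists>c. v = (\<Sum>b\<in>B. c b *\<^sub>R b) \<and> (\<forall>b\<in>B. c b \<in> F))"

lemma has_F_coordinates_base:
  assumes "real_subfield F" "finite B" "b \<in> B"
  shows "has_F_coordinates F B b"
proof -
  have "(\<Sum>x\<in>B. (if x = b then 1 else 0) *\<^sub>R x) = (\<Sum>x\<in>B. if x = b then x else 0)"
    by (intro sum.cong) auto
  also have "\<dots> = b"
    using assms(2,3) by simp
  finally show ?thesis
    unfolding has_F_coordinates_def
    using real_subfield_0[OF assms(1)] real_subfield_1[OF assms(1)]
    by (intro exI[of _ "\<lambda>x. if x = b then 1 else 0"]) auto
qed

lemma has_F_coordinates_add:
  assumes "real_subfield F" "has_F_coordinates F B x" "has_F_coordinates F B y"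
  shows "has_F_coordinates F B (x + y)"
proof -
  obtain c d where "x = (\<Sum>b\<in>B. c b *\<^sub>R b)" "y = (\<Sum>b\<in>B. d b *\<^sub>R b)"
    and "\<forall>b\<in>B. c b \<in> F" "\<forall>b\<in>B. d b \<in> F"
    using assms(2,3) unfolding has_F_coordinates_def by blast
  then show ?thesis
    unfolding has_F_coordinates_def using real_subfield_add[OF assms(1)]
    by (intro exI[of _ "\<lambda>b. c b + d b"]) (simp add: scaleR_add_left sum.distrib)
qed

lemma has_F_coordinates_mono:
  assumes "real_subfield F" "finite C" "B \<subseteq> C" "has_F_coordinates F B v"
  shows "has_F_coordinates F C v"
proof -
  obtain c where c: "v = (\<Sum>b\<in>B. c b *\<^sub>R b)" "\<forall>b\<in>B. c b \<in> F"
    using assms(4) unfolding has_F_coordinates_def by blast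
  define c' where "c' b = (if b \<in> B then c b else 0)" for b
  have "(\<Sum>b\<in>C. c' b *\<^sub>R b) = (\<Sum>b\<in>B. c' b *\<^sub>R b)"
    using assms(2,3) by (intro sum.mono_neutral_right) (auto simp: c'_def)
  also have "\<dots> = v"
    unfolding c by (intro sum.cong) (auto simp: c'_def)
  finally show ?thesis
    unfolding has_F_coordinates_def using c(2) real_subfield_0[OF assms(1)]
    by (intro exI[of _ c']) (auto simp: c'_def)
qed

lemma Gram_Schmidt_step_real_subfield:
  fixes B T :: "'a::euclidean_space set"
  assumes F: "real_subfield F" and B: "pairwise orthogonal B"
    and BT: "\<forall>b\<in>B. \<forall>t\<in>T. b \<bullet> t \<in> F" and BB: "\<forall>b\<in>B. b \<bullet> b \<in> F"
    and TT: "\<forall>x\<in>T. \<forall>y\<in>T. x \<bullet> y \<in> F" and a: "a \<in> T"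
  obtains a' where "\<forall>b\<in>B. orthogonal b a'" "\<forall>t\<in>T. a' \<bullet> t \<in> F" "a' \<bullet> a' \<in> F"
    "has_F_coordinates F B (a - a')"
proof
  define d where "d b = b \<bullet> a / (b \<bullet> b)" for b
  define a' where "a' = a - (\<Sum>b\<in>B. d b *\<^sub>R b)"
  have dF: "d b \<in> F" if "b \<in> B" for b
    unfolding d_def using that BT BB a real_subfield_divide[OF F] by blast
  show orth: "\<forall>b\<in>B. orthogonal b a'"
    unfolding a'_def d_def using Gram_Schmidt_step[OF B] span_base by blast
  show a'T: "\<forall>t\<in>T. a' \<bullet> t \<in> F"
  proof
    fix t assume t: "t \<in> T"
    have "a' \<bullet> t = a \<bullet> t - (\<Sum>b\<in>B. d b * (b \<bullet> t))"
      unfolding a'_def by (simp add: inner_diff_left inner_sum_left)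
    moreover have "(\<Sum>b\<in>B. d b * (b \<bullet> t)) \<in> F"
      using dF BT t real_subfield_mult[OF F] by (intro real_subfield_sum[OF F]) blast
    ultimately show "a' \<bullet> t \<in> F"
      using TT a t real_subfield_diff[OF F] by simp
  qed
  have "a' \<bullet> a' = a' \<bullet> a - (\<Sum>b\<in>B. d b * (a' \<bullet> b))"
    by (subst (1) a'_def) (simp add: inner_diff_right inner_sum_right)
  also have "(\<Sum>b\<in>B. d b * (a' \<bullet> b)) = 0"
    using orth by (intro sum.neutral) (simp add: orthogonal_def inner_commute)
  finally show "a' \<bullet> a' \<in> F"
    using a'T a by simp
  show "has_F_coordinates F B (a - a')"
    unfolding has_F_coordinates_def a'_def using dF by auto
qed

lemma Gram_Schmidt_real_subfield:
  fixes S T :: "'a::euclidean_space set"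
  assumes F: "real_subfield F" and "finite S" "S \<subseteq> T"
    and TT: "\<forall>x\<in>T. \<forall>y\<in>T. x \<bullet> y \<in> F"
  shows "\<exists>B. finite B \<and> pairwise orthogonal B \<and> 0 \<notin> B \<and>
    (\<forall>b\<in>B. \<forall>t\<in>T. b \<bullet> t \<in> F) \<and> (\<forall>b\<in>B. b \<bullet> b \<in> F) \<and> (\<forall>s\<in>S. has_F_coordinates F B s)"
  using assms(2,3)
proof (induction S rule: finite_induct)
  case empty
  show ?case by (intro exI[of _ "{}"]) simp
next
  case (insert a S)
  then obtain B where B: "finite B" "pairwise orthogonal B" "0 \<notin> B"
    and BT: "\<forall>b\<in>B. \<forall>t\<in>T. b \<bullet> t \<in> F" and BB: "\<forall>b\<in>B. b \<bullet> b \<in> F"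
    and BS: "\<forall>s\<in>S. has_F_coordinates F B s"
    by auto
  obtain a' where orth: "\<forall>b\<in>B. orthogonal b a'" and a'T: "\<forall>t\<in>T. a' \<bullet> t \<in> F"
    and a'a': "a' \<bullet> a' \<in> F" and a: "has_F_coordinates F B (a - a')"
    using Gram_Schmidt_step_real_subfield[OF F B(2) BT BB TT] insert.prems by blast
  show ?case
  proof (cases "a' = 0")
    case True
    then show ?thesis using B BT BB BS a by (intro exI[of _ B]) auto
  next
    case False
    let ?B' = "insert a' B"
    have "finite ?B'" using B(1) by simp
    have "has_F_coordinates F ?B' (a' + (a - a'))"
      using has_F_coordinates_base[OF F \<open>finite ?B'\<close>] has_F_coordinates_mono[OF F \<open>finite ?B'\<close>] a
      by (intro has_F_coordinates_add[OF F]) auto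
    moreover have "has_F_coordinates F ?B' s" if "s \<in> S" for s
      using has_F_coordinates_mono[OF F \<open>finite ?B'\<close> _ BS[rule_format, OF that]] by blast
    moreover have "pairwise orthogonal ?B'"
      using B(2) orth by (auto simp: pairwise_orthogonal_insert orthogonal_commute)
    ultimately show ?thesis
      using \<open>finite ?B'\<close> B(3) False BT BB a'T a'a' by (intro exI[of _ ?B']) auto
  qed
qed

lemma orthogonal_basis_extension:
  fixes B :: "'a::euclidean_space set"
  assumes B: "pairwise orthogonal B" "0 \<notin> B"
  obtains U where "B \<subseteq> U" "independent U" "span U = UNIV" "pairwise orthogonal U"
    "\<forall>u\<in>U - B. norm u = 1"
proof -
  obtain U0 where U0: "U0 \<inter> insert 0 B = {}" "pairwise orthogonal (B \<union> U0)"
      "span (B \<union> U0) = span (B \<union> UNIV)"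
    using orthogonal_extension_strong[OF B(1)] by blast
  obtain D where D: "D \<subseteq> span U0" "pairwise orthogonal D" "\<And>x. x \<in> D \<Longrightarrow> norm x = 1"
      "span D = span U0"
    using orthonormal_basis_subspace[OF subspace_span[of U0]] by metis
  have BU0: "orthogonal b u" if "b \<in> B" "u \<in> U0" for b u
  proof -
    have "b \<noteq> u" using U0(1) that by blast
    then show ?thesis using U0(2) that unfolding pairwise_def by blast
  qed
  have BD: "orthogonal b d" if "b \<in> B" "d \<in> D" for b d
    using orthogonal_to_span[of d U0 b] D(1) BU0 that by blast
  have orth: "pairwise orthogonal (B \<union> D)"
    using B(1) D(2) BD unfolding pairwise_def by (metis Un_iff orthogonal_commute)
  moreover have "0 \<notin> B \<union> D"
    using B(2) D(3) by fastforce
  ultimately have "independent (B \<union> D)"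
    by (rule pairwise_orthogonal_independent)
  moreover have "span (B \<union> D) = UNIV"
    using U0(3) D(4) by (simp add: span_Un)
  ultimately show thesis
    using orth D(3) by (intro that[of "B \<union> D"]) auto
qed

lemma finite_simplex_vertices: "k simplex S \<Longrightarrow> finite (simplex_vertices S)"
  unfolding simplex simplex_vertices_def
  by (metis (no_types) extreme_point_of_convex_hull finite_subset mem_Collect_eq subsetI)

lemma F_simplex_dist_sq:
  assumes "real_subfield F" "F_simplex F S" "x \<in> simplex_vertices S" "y \<in> simplex_vertices S"
  shows "(dist x y)\<^sup>2 \<in> F"
  using assms real_subfield_0[OF assms(1)] unfolding F_simplex_def by (cases "x = y") auto

lemma F_simplex_inner:
  assumes F: "real_subfield F" and S: "F_simplex F S" and "0 \<in> simplex_vertices S"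
    and "x \<in> simplex_vertices S" "y \<in> simplex_vertices S"
  shows "x \<bullet> y \<in> F"
proof -
  have "x \<bullet> y = ((dist x 0)\<^sup>2 + (dist y 0)\<^sup>2 - (dist x y)\<^sup>2) / 2"
    by (simp add: dist_norm power2_norm_eq_inner inner_diff_left inner_diff_right inner_commute)
  moreover have "(2::real) \<in> F"
    using real_subfield_add[OF F real_subfield_1[OF F] real_subfield_1[OF F]] by simp
  ultimately show ?thesis
    using F_simplex_dist_sq[OF F S] assms(3-5)
    by (metis real_subfield_add[OF F] real_subfield_diff[OF F] real_subfield_divide[OF F])
qed

theorem lemma6p3:
  fixes F :: "real set" and \<sigma> :: "(real ^ 'n) set" and k :: int
  assumes "real_subfield F"
    and "k simplex \<sigma>"
    and "F_simplex F \<sigma>"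
    and "0 \<in> simplex_vertices \<sigma>"
  shows "\<exists>U :: (real ^ 'n) set.
           independent U \<and> span U = UNIV \<and> pairwise orthogonal U \<and>
           (\<forall>u\<in>U. (norm u)\<^sup>2 \<in> F) \<and>
           (\<forall>v\<in>simplex_vertices \<sigma>. \<exists>c :: real ^ 'n \<Rightarrow> real.
               v = (\<Sum>u\<in>U. c u *\<^sub>R u) \<and> (\<forall>u\<in>U. c u \<in> F))"
proof -
  let ?T = "simplex_vertices \<sigma>"
  have "\<forall>x\<in>?T. \<forall>y\<in>?T. x \<bullet> y \<in> F"
    using F_simplex_inner[OF assms(1,3,4)] by blast
  then obtain B where B: "pairwise orthogonal B" "0 \<notin> B"
    and BB: "\<forall>b\<in>B. b \<bullet> b \<in> F" and BT: "\<forall>v\<in>?T. has_F_coordinates F B v"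
    using Gram_Schmidt_real_subfield[OF assms(1) finite_simplex_vertices[OF assms(2)] order_refl]
    by blast
  obtain U where U: "B \<subseteq> U" "independent U" "span U = UNIV" "pairwise orthogonal U"
    and unit: "\<forall>u\<in>U - B. norm u = 1"
    using orthogonal_basis_extension[OF B] by blast
  have "finite U" using U(2) by (rule independent_imp_finite)
  have "(norm u)\<^sup>2 \<in> F" if "u \<in> U" for u
    using that BB unit real_subfield_1[OF assms(1)] by (cases "u \<in> B") (auto simp: power2_norm_eq_inner)
  moreover have "has_F_coordinates F U v" if "v \<in> ?T" for v
    using has_F_coordinates_mono[OF assms(1) \<open>finite U\<close> U(1)] BT that by blast
  ultimately show ?thesis
    using U unfolding has_F_coordinates_def by blast
qed

end
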